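(* Let $\Omega\subset\mathbb{C}^n$ be a Reinhardt domain and let $A$ be a Banach space of holomorphic functions on $\Omega$ such that for each $z\in\Omega$ the evaluation functional $f\mapsto f(z)$ is continuous on $A$. Then for every $m>0$ the series $$\sum_{\alpha\in\mathbb{Z}^n,\ e_\alpha\in A}\frac{e_\alpha}{\|e_\alpha\|_A^m}$$ converges locally normally on $\Omega^{(m)}$.
   Context: $\Omega$ Reinhardt means invariant under $z\mapsto(e^{i\theta_1}z_1,\dots,e^{i\theta_n}z_n)$ for all $\theta\in\mathbb{R}^n$. $e_\alpha(z)=z_1^{\alpha_1}\cdots z_n^{\alpha_n}$. The $m$-th Reinhardt power of $\Omega$ is $\Omega^{(m)}=\{z\in\mathbb{C}^n:(|z_1|^{1/m},\dots,|z_n|^{1/m})\in\Omega\}$. A series of functions $\sum_\alpha h_\alpha$ converges locally normally on a domain $D$ if for every compact $K\subset D$, $\sum_\alpha\sup_K|h_\alpha|<\infty$. *)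

theory Defs
  imports "HOL-Analysis.Analysis"
begin

definition reinhardt :: "(complex ^ 'n) set \<Rightarrow> bool" where
  "reinhardt \<Omega> \<longleftrightarrow>
     (\<forall>z\<in>\<Omega>. \<forall>\<theta>::real ^ 'n. (\<chi> i. exp (\<i> * of_real (\<theta> $ i)) * z $ i) \<in> \<Omega>)"

definition domain :: "(complex ^ 'n) set \<Rightarrow> bool" where
  "domain \<Omega> \<longleftrightarrow> open \<Omega> \<and> connected \<Omega>"

definition holo_on :: "(complex ^ 'n \<Rightarrow> complex) \<Rightarrow> (complex ^ 'n) set \<Rightarrow> bool" where
  "holo_on f \<Omega> \<longleftrightarrow>
     (\<forall>z\<in>\<Omega>. \<exists>L. (f has_derivative L) (at z) \<and> (\<forall>c v. L (c *s v) = c * L v))"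

definition monom :: "int ^ 'n \<Rightarrow> complex ^ 'n \<Rightarrow> complex" where
  "monom \<alpha> z = (\<Prod>i\<in>UNIV. (z $ i) powi (\<alpha> $ i))"

definition reinhardt_power :: "(complex ^ 'n) set \<Rightarrow> real \<Rightarrow> (complex ^ 'n) set" where
  "reinhardt_power \<Omega> m = {z. (\<chi> i. complex_of_real (norm (z $ i) powr (1 / m))) \<in> \<Omega>}"

text \<open>Restriction of a function to \<Omega> (elements of a function space on \<Omega> are
  represented canonically as functions vanishing outside \<Omega>).\<close>
definition restr :: "(complex ^ 'n) set \<Rightarrow> (complex ^ 'n \<Rightarrow> complex) \<Rightarrow> (complex ^ 'n \<Rightarrow> complex)" where
  "restr \<Omega> f = (\<lambda>z. if z \<in> \<Omega> then f z else 0)"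

definition banach_holo_space ::
  "(complex ^ 'n) set \<Rightarrow> (complex ^ 'n \<Rightarrow> complex) set \<Rightarrow> ((complex ^ 'n \<Rightarrow> complex) \<Rightarrow> real) \<Rightarrow> bool" where
  "banach_holo_space \<Omega> A N \<longleftrightarrow>
     (\<forall>f\<in>A. holo_on f \<Omega> \<and> (\<forall>z. z \<notin> \<Omega> \<longrightarrow> f z = 0)) \<and>
     (\<lambda>_. 0) \<in> A \<and>
     (\<forall>f\<in>A. \<forall>g\<in>A. (\<lambda>z. f z + g z) \<in> A) \<and>
     (\<forall>f\<in>A. \<forall>c::complex. (\<lambda>z. c * f z) \<in> A) \<and>
     (\<forall>f\<in>A. N f \<ge> 0) \<and>
     (\<forall>f\<in>A. N f = 0 \<longrightarrow> f = (\<lambda>_. 0)) \<and>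
     (\<forall>f\<in>A. \<forall>c::complex. N (\<lambda>z. c * f z) = norm c * N f) \<and>
     (\<forall>f\<in>A. \<forall>g\<in>A. N (\<lambda>z. f z + g z) \<le> N f + N g) \<and>
     (\<forall>s::nat \<Rightarrow> (complex ^ 'n \<Rightarrow> complex). (\<forall>k. s k \<in> A) \<longrightarrow>
        (\<forall>e>0. \<exists>K. \<forall>p\<ge>K. \<forall>q\<ge>K. N (\<lambda>z. s p z - s q z) < e) \<longrightarrow>
        (\<exists>f\<in>A. (\<lambda>k. N (\<lambda>z. s k z - f z)) \<longlonglongrightarrow> 0)) \<and>
     (\<forall>z\<in>\<Omega>. \<exists>C. \<forall>f\<in>A. norm (f z) \<le> C * N f)"

definition locally_normally_convergent ::
  "('i \<Rightarrow> complex ^ 'n \<Rightarrow> complex) \<Rightarrow> 'i set \<Rightarrow> (complex ^ 'n) set \<Rightarrow> bool" where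
  "locally_normally_convergent h S D \<longleftrightarrow>
     (\<forall>K. K \<subseteq> D \<and> compact K \<longrightarrow>
        (\<exists>M::'i \<Rightarrow> real. M summable_on S \<and> (\<forall>\<alpha>\<in>S. \<forall>z\<in>K. norm (h \<alpha> z) \<le> M \<alpha>)))"

end

(* Write a_i = |w0_i|^(1/m). Since |e_alpha(w)| = |e_alpha(w')|^m for w'_i = |w_i|^(1/m),
   it suffices to control e_alpha at real points x near the point a, which lies in Omega.
   Shifting every coordinate of a by 2d, upwards where alpha_i > 0 and downwards where
   alpha_i < 0, gives one of finitely many corner points p in Omega with
   |e_alpha(x)| <= q^|alpha| |e_alpha(p)| for a fixed q < 1, and the continuity of the
   finitely many evaluations at the corners gives |e_alpha(p)| <= C ||e_alpha||_A.  So near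
   w0 the terms of the series are dominated by C^m (q^m)^|alpha|, which is summable over Z^n.
   Downward shifts are possible since a_i > 0 whenever alpha_i < 0: a monomial with a
   negative exponent in z_i is unbounded near any point with z_i = 0, hence not holomorphic
   there. *)

theory Submission
  imports Defs
begin

lemma summable_on_int_power_abs:
  fixes x :: real
  assumes "0 \<le> x" "x < 1"
  shows "(\<lambda>j::int. x ^ nat \<bar>j\<bar>) summable_on UNIV"
proof -
  have geo: "(\<lambda>n. x ^ n) summable_on UNIV"
    using assms by (subst summable_on_UNIV_nonneg_real_iff) (auto intro: summable_geometric)
  have "(\<lambda>j::int. x ^ nat \<bar>j\<bar>) summable_on range int"
    using geo by (subst summable_on_reindex) (auto simp: o_def)
  moreover have "(\<lambda>j::int. x ^ nat \<bar>j\<bar>) summable_on range (\<lambda>n. - int (Suc n))"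
    using summable_on_cmult_right[OF geo, of x]
    by (subst summable_on_reindex) (auto simp: o_def inj_def nat_add_distrib)
  moreover have "j \<in> range int \<union> range (\<lambda>n. - int (Suc n))" for j :: int
    by (cases j rule: int_cases) auto
  then have "UNIV = range int \<union> range (\<lambda>n. - int (Suc n))"
    by auto
  moreover have "range int \<inter> range (\<lambda>n. - int (Suc n)) = {}"
    by auto
  ultimately show ?thesis
    by (metis summable_on_Un_disjoint)
qed

(* The library's product rule for sums over PiE is stated for Infinite_Set_Sum.abs_summable_on. *)
lemma summable_on_prod_power_abs:
  fixes x :: real
  assumes "0 \<le> x" "x < 1"
  shows "(\<lambda>\<alpha>::int ^ 'n. \<Prod>i\<in>UNIV. x ^ nat \<bar>\<alpha> $ i\<bar>) summable_on UNIV"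
proof -
  have "Infinite_Set_Sum.abs_summable_on (\<lambda>j::int. x ^ nat \<bar>j\<bar>) UNIV"
    using summable_on_int_power_abs[OF assms] assms by (simp flip: abs_summable_equivalent)
  then have "Infinite_Set_Sum.abs_summable_on (\<lambda>g. \<Prod>i\<in>UNIV. x ^ nat \<bar>g i\<bar>) (PiE (UNIV :: 'n set) (\<lambda>_. UNIV))"
    by (intro abs_summable_on_prod_PiE) auto
  moreover have "range (vec_nth :: int ^ 'n \<Rightarrow> _) = UNIV"
    by (metis surj_def vec_lambda_inverse UNIV_I)
  ultimately have "(\<lambda>g. \<Prod>i\<in>UNIV. x ^ nat \<bar>g i\<bar>) summable_on range (vec_nth :: int ^ 'n \<Rightarrow> _)"
    using assms by (simp add: PiE_UNIV_domain abs_prod power_abs flip: abs_summable_equivalent)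
  then show ?thesis
    by (subst (asm) summable_on_reindex) (auto simp: o_def inj_def vec_eq_iff)
qed

lemma summable_on_sum:
  fixes f :: "'i \<Rightarrow> 'a \<Rightarrow> 'b::topological_comm_monoid_add"
  assumes "\<And>i. i \<in> I \<Longrightarrow> f i summable_on S"
  shows "(\<lambda>x. \<Sum>i\<in>I. f i x) summable_on S"
  using assms by (induction I rule: infinite_finite_induct) (auto intro: summable_on_add)

lemma locally_normally_convergentI:
  assumes "\<And>w. w \<in> D \<Longrightarrow> \<exists>U M. open U \<and> w \<in> U \<and> M summable_on S \<and> (\<forall>\<alpha>\<in>S. \<forall>z\<in>U. norm (h \<alpha> z) \<le> M \<alpha>)"
  shows "locally_normally_convergent h S D"
  unfolding locally_normally_convergent_def
proof (intro allI impI)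
  fix K assume K: "K \<subseteq> D \<and> compact K"
  obtain U M where UM: "\<And>w. w \<in> D \<Longrightarrow> open (U w) \<and> w \<in> U w \<and> M w summable_on S \<and>
      (\<forall>\<alpha>\<in>S. \<forall>z\<in>U w. norm (h \<alpha> z) \<le> M w \<alpha>)"
    using assms by metis
  have "\<And>w. w \<in> K \<Longrightarrow> open (U w)" "K \<subseteq> (\<Union>w\<in>K. U w)"
    using UM K by blast+
  then obtain T where T: "T \<subseteq> K" "finite T" "K \<subseteq> (\<Union>w\<in>T. U w)"
    using compactE_image[of K K U] K by blast
  show "\<exists>M'. M' summable_on S \<and> (\<forall>\<alpha>\<in>S. \<forall>z\<in>K. norm (h \<alpha> z) \<le> M' \<alpha>)"
  proof (intro exI conjI ballI)
    show "(\<lambda>\<alpha>. \<Sum>w\<in>T. M w \<alpha>) summable_on S"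
      using T K UM by (intro summable_on_sum) auto
    fix \<alpha> z assume "\<alpha> \<in> S" "z \<in> K"
    then obtain t where t: "t \<in> T" "z \<in> U t"
      using T by blast
    have nonneg: "0 \<le> M w \<alpha>" if "w \<in> T" for w
      using UM[of w] that T K \<open>\<alpha> \<in> S\<close> by (meson norm_ge_zero order_trans subsetD)
    have "norm (h \<alpha> z) \<le> M t \<alpha>"
      using UM[of t] t T K \<open>\<alpha> \<in> S\<close> by blast
    also have "\<dots> \<le> (\<Sum>w\<in>T. M w \<alpha>)"
      using t T nonneg by (intro member_le_sum) auto
    finally show "norm (h \<alpha> z) \<le> (\<Sum>w\<in>T. M w \<alpha>)" .
  qed
qed

lemma dist_vec_le_card_mult:
  fixes x y :: "'a::metric_space ^ 'n"
  assumes "\<And>i. dist (x $ i) (y $ i) \<le> e"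
  shows "dist x y \<le> real CARD('n) * e"
proof -
  have "dist x y \<le> (\<Sum>i\<in>UNIV. dist (x $ i) (y $ i))"
    unfolding dist_vec_def by (rule L2_set_le_sum) simp
  also have "\<dots> \<le> real CARD('n) * e"
    using sum_bounded_above[of UNIV "\<lambda>i. dist (x $ i) (y $ i)" e] assms by simp
  finally show ?thesis .
qed

lemma norm_monom: "norm (monom \<alpha> z) = (\<Prod>i\<in>UNIV. norm (z $ i) powi (\<alpha> $ i))"
  by (simp add: monom_def norm_power_int flip: prod_norm)

lemma power_int_powr_commute:
  fixes x :: real
  assumes "0 \<le> x"
  shows "(x powi k) powr m = (x powr m) powi k"
proof (cases "x = 0")
  case True
  then show ?thesis by (cases "k = 0") auto
next
  case False
  with assms show ?thesis
    by (simp add: powr_real_of_int'[symmetric] powr_powr mult.commute)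
qed

lemma norm_monom_root:
  assumes "0 < m"
  shows "norm (monom \<alpha> z) = norm (monom \<alpha> (\<chi> i. complex_of_real (norm (z $ i) powr (1 / m)))) powr m"
  unfolding norm_monom using assms
  by (simp add: prod_powr_distrib power_int_powr_commute powr_powr)

lemma power_int_neg_ge_inverse:
  fixes u :: real
  assumes "0 < u" "u \<le> 1" "k < 0"
  shows "1 / u \<le> u powi k"
proof -
  have "u ^ nat (- k) \<le> u ^ 1"
    using assms by (intro power_decreasing) auto
  then show ?thesis
    using assms by (simp add: power_int_def power_inverse divide_inverse le_imp_inverse_le)
qed

lemma monom_large_near_zero_coord:
  fixes p :: "complex ^ 'n"
  assumes "\<alpha> $ i < 0" "p $ i = 0" "0 < e"
  obtains z where "dist z p < e" "1 \<le> norm (monom \<alpha> z)"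
proof -
  define t where "t = e / (2 * real CARD('n))"
  have t: "0 < t" "real CARD('n) * t < e"
    using assms by (auto simp: t_def)
  define w where "w = (\<chi> j. if p $ j = 0 then complex_of_real t else p $ j)"
  define c where "c = (\<Prod>j\<in>UNIV - {i}. norm (w $ j) powi (\<alpha> $ j))"
  have "0 < c"
    unfolding c_def using t by (intro prod_pos) (auto simp: w_def)
  define u where "u = min t (min c 1)"
  have u: "0 < u" "u \<le> t" "u \<le> c" "u \<le> 1"
    using t \<open>0 < c\<close> by (auto simp: u_def)
  define z where "z = (\<chi> j. if j = i then complex_of_real u else w $ j)"
  show ?thesis
  proof
    have "dist (z $ j) (p $ j) \<le> t" for j
      using u t assms(2) by (auto simp: z_def w_def dist_norm)
    then show "dist z p < e"
      using dist_vec_le_card_mult t(2) by (metis order.strict_trans1)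
    have "norm (monom \<alpha> z) = u powi (\<alpha> $ i) * c"
      unfolding norm_monom c_def
      by (subst prod.remove[of _ i]) (use u in \<open>auto simp: z_def intro!: prod.cong\<close>)
    also have "\<dots> \<ge> (1 / u) * c"
      using power_int_neg_ge_inverse[of u "\<alpha> $ i"] u assms(1) \<open>0 < c\<close>
      by (intro mult_right_mono) auto
    also have "(1 / u) * c \<ge> 1"
      using u by simp
    finally show "1 \<le> norm (monom \<alpha> z)" .
  qed
qed

lemma not_isCont_monom_zero_coord:
  assumes "\<alpha> $ i < 0" "p $ i = 0"
  shows "\<not> isCont (monom \<alpha>) p"
proof
  assume "isCont (monom \<alpha>) p"
  moreover have "monom \<alpha> p = 0"
    unfolding monom_def using assms by (intro prod_zero) auto
  ultimately obtain e where "0 < e" "\<And>z. dist z p < e \<Longrightarrow> norm (monom \<alpha> z) < 1"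
    unfolding continuous_at_eps_delta dist_norm by (metis diff_zero zero_less_one)
  with monom_large_near_zero_coord[OF assms] show False
    by (metis not_less)
qed

lemma banach_holo_space_monom_nonzero_coord:
  assumes "banach_holo_space \<Omega> A N" "open \<Omega>" "restr \<Omega> (monom \<alpha>) \<in> A"
    and "p \<in> \<Omega>" "\<alpha> $ i < 0"
  shows "p $ i \<noteq> 0"
proof
  assume "p $ i = 0"
  have "holo_on (restr \<Omega> (monom \<alpha>)) \<Omega>"
    using assms(1,3) by (simp add: banach_holo_space_def)
  then have "isCont (restr \<Omega> (monom \<alpha>)) p"
    using assms(4) unfolding holo_on_def by (blast intro: has_derivative_continuous)
  moreover have "\<forall>\<^sub>F z in nhds p. restr \<Omega> (monom \<alpha>) z = monom \<alpha> z"
    using eventually_nhds_in_open[OF assms(2,4)] by eventually_elim (simp add: restr_def)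
  ultimately have "isCont (monom \<alpha>) p"
    by (simp add: isCont_cong)
  with not_isCont_monom_zero_coord[OF assms(5) \<open>p $ i = 0\<close>] show False ..
qed

lemma banach_holo_space_uniform_eval_bound:
  assumes "banach_holo_space \<Omega> A N" "finite P" "P \<subseteq> \<Omega>"
  obtains C where "\<And>p f. p \<in> P \<Longrightarrow> f \<in> A \<Longrightarrow> norm (f p) \<le> C * N f"
proof -
  have "\<forall>p\<in>P. \<exists>c. \<forall>f\<in>A. norm (f p) \<le> c * N f"
    using assms(1,3) unfolding banach_holo_space_def by blast
  then obtain C where C: "\<And>p f. p \<in> P \<Longrightarrow> f \<in> A \<Longrightarrow> norm (f p) \<le> C p * N f"
    by metis
  have N: "\<And>f. f \<in> A \<Longrightarrow> 0 \<le> N f"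
    using assms(1) by (simp add: banach_holo_space_def)
  show ?thesis
  proof
    fix p f assume "p \<in> P" "f \<in> A"
    have "C p \<le> \<bar>C p\<bar>"
      by simp
    also have "\<dots> \<le> (\<Sum>p\<in>P. \<bar>C p\<bar>)"
      using \<open>p \<in> P\<close> assms(2) by (intro member_le_sum) auto
    finally have "C p \<le> (\<Sum>p\<in>P. \<bar>C p\<bar>)" .
    then show "norm (f p) \<le> (\<Sum>p\<in>P. \<bar>C p\<bar>) * N f"
      using C[OF \<open>p \<in> P\<close> \<open>f \<in> A\<close>] N[OF \<open>f \<in> A\<close>] by (meson mult_right_mono order_trans)
  qed
qed

lemma power_int_le_geometric:
  fixes b c q :: real and k :: int
  assumes "0 < q" "0 < k \<Longrightarrow> 0 \<le> b \<and> b \<le> q * c" "k < 0 \<Longrightarrow> 0 < c \<and> c \<le> q * b"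
  shows "b powi k \<le> q ^ nat \<bar>k\<bar> * c powi k"
proof (cases k "0::int" rule: linorder_cases)
  case less
  define n where "n = nat (- k)"
  have "0 < c" "c \<le> q * b"
    using assms(3) less by auto
  then have "0 < b"
    using \<open>0 < q\<close> by (metis order.strict_trans2 zero_less_mult_pos)
  have "c ^ n \<le> q ^ n * b ^ n"
    using \<open>0 < c\<close> \<open>c \<le> q * b\<close> by (metis less_imp_le power_mono power_mult_distrib)
  then have "inverse (b ^ n) \<le> q ^ n * inverse (c ^ n)"
    using \<open>0 < b\<close> \<open>0 < c\<close> by (simp add: field_simps)
  then show ?thesis
    using less by (simp add: power_int_def n_def power_inverse)
next
  case greater
  then have "b ^ nat k \<le> (q * c) ^ nat k"
    using assms(2) by (intro power_mono) auto
  then show ?thesis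
    using greater by (simp add: power_int_def power_mult_distrib)
qed simp

(* (R + d) / (R + 2 d) is the largest of the ratios (a + d) / (a + 2 d) with 0 <= a <= R. *)
lemma power_int_le_geometric_shift:
  fixes a b d R :: real and k :: int
  assumes "0 \<le> a" "a \<le> R" "0 \<le> b" "\<bar>b - a\<bar> < d" "k < 0 \<Longrightarrow> 4 * d \<le> a"
  shows "b powi k \<le> ((R + d) / (R + 2 * d)) ^ nat \<bar>k\<bar> * \<bar>a + 2 * d * of_int (sgn k)\<bar> powi k"
proof (rule power_int_le_geometric)
  have "0 < d" "0 < R + 2 * d"
    using assms by linarith+
  then show "0 < (R + d) / (R + 2 * d)"
    using assms by (intro divide_pos_pos) linarith+
  have "b * (R + 2 * d) \<le> (a + d) * (R + 2 * d)"
    using assms \<open>0 < R + 2 * d\<close> by (intro mult_right_mono) linarith+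
  also have "\<dots> \<le> (R + d) * (a + 2 * d)"
    using assms \<open>0 < d\<close> by (simp add: algebra_simps mult_right_mono)
  finally show "0 \<le> b \<and> b \<le> (R + d) / (R + 2 * d) * \<bar>a + 2 * d * of_int (sgn k)\<bar>" if "0 < k"
    using that assms \<open>0 < R + 2 * d\<close> by (simp add: field_simps)
  have "b * d \<le> (R + 2 * d) * d"
    using assms \<open>0 < d\<close> by (intro mult_right_mono) linarith+
  then have "(b - d) * (R + 2 * d) \<le> (R + d) * b"
    by (simp add: algebra_simps)
  moreover have "(a - 2 * d) * (R + 2 * d) \<le> (b - d) * (R + 2 * d)"
    using assms \<open>0 < R + 2 * d\<close> by (intro mult_right_mono) linarith+
  ultimately show "0 < \<bar>a + 2 * d * of_int (sgn k)\<bar> \<and> \<bar>a + 2 * d * of_int (sgn k)\<bar> \<le> (R + d) / (R + 2 * d) * b"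
    if "k < 0"
    using that assms \<open>0 < d\<close> \<open>0 < R + 2 * d\<close> by (simp add: field_simps)
qed

lemma norm_monom_le_geometric_shift:
  fixes a b :: "'n::finite \<Rightarrow> real" and \<alpha> :: "int ^ 'n"
  assumes "\<And>i. 0 \<le> a i" "\<And>i. a i \<le> R" "\<And>i. 0 \<le> b i" "\<And>i. \<bar>b i - a i\<bar> < d"
    and "\<And>i. \<alpha> $ i < 0 \<Longrightarrow> 4 * d \<le> a i"
  shows "norm (monom \<alpha> (\<chi> i. complex_of_real (b i)))
    \<le> (\<Prod>i\<in>UNIV. ((R + d) / (R + 2 * d)) ^ nat \<bar>\<alpha> $ i\<bar>)
       * norm (monom \<alpha> (\<chi> i. complex_of_real (a i + 2 * d * of_int (sgn (\<alpha> $ i)))))"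
proof -
  have "\<bar>b i\<bar> powi (\<alpha> $ i)
    \<le> ((R + d) / (R + 2 * d)) ^ nat \<bar>\<alpha> $ i\<bar> * \<bar>a i + 2 * d * of_int (sgn (\<alpha> $ i))\<bar> powi (\<alpha> $ i)" for i
    using power_int_le_geometric_shift[of "a i" R "b i" d "\<alpha> $ i"] assms by simp
  then show ?thesis
    unfolding norm_monom vec_lambda_beta norm_of_real prod.distrib[symmetric]
    by (intro prod_mono conjI) simp_all
qed

lemma monom_le_geometric_at_corners:
  fixes a :: "'n::finite \<Rightarrow> real" and \<Omega> :: "(complex ^ 'n) set"
  assumes "open \<Omega>" "(\<chi> i. complex_of_real (a i)) \<in> \<Omega>" "\<And>i. 0 \<le> a i"
  obtains d q P where "0 < d" "0 < q" "q < 1" "finite P" "P \<subseteq> \<Omega>"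
    "\<And>\<alpha> b. (\<And>i. 0 \<le> b i) \<Longrightarrow> (\<And>i. \<bar>b i - a i\<bar> < d) \<Longrightarrow> (\<And>i. \<alpha> $ i < 0 \<Longrightarrow> 0 < a i) \<Longrightarrow>
       \<exists>p\<in>P. norm (monom \<alpha> (\<chi> i. complex_of_real (b i))) \<le> (\<Prod>i\<in>UNIV. q ^ nat \<bar>\<alpha> $ i\<bar>) * norm (monom \<alpha> p)"
proof -
  obtain \<delta> where "0 < \<delta>" and ball: "ball (\<chi> i. complex_of_real (a i)) \<delta> \<subseteq> \<Omega>"
    using assms(1,2) open_contains_ball by blast
  define d where "d = Min (insert (\<delta> / (4 * real CARD('n))) ((\<lambda>i. a i / 4) ` {i. 0 < a i}))"
  have "0 < d"
    unfolding d_def using \<open>0 < \<delta>\<close> by (subst Min_gr_iff) auto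
  have d_le: "d \<le> \<delta> / (4 * real CARD('n))" "\<And>i. 0 < a i \<Longrightarrow> d \<le> a i / 4"
    unfolding d_def by (intro Min_le; auto)+
  define R where "R = (\<Sum>i\<in>UNIV. a i)"
  have aR: "a i \<le> R" for i
    unfolding R_def using assms(3) by (intro member_le_sum) auto
  define corner where "corner s = (\<chi> i. complex_of_real (a i + 2 * d * of_int (s i)))" for s :: "'n \<Rightarrow> int"
  define P where "P = corner ` PiE UNIV (\<lambda>_. {-1, 0, 1})"
  show ?thesis
  proof
    show "0 < d" by fact
    have "0 \<le> R"
      unfolding R_def using assms(3) by (simp add: sum_nonneg)
    then show "0 < (R + d) / (R + 2 * d)" "(R + d) / (R + 2 * d) < 1"
      using \<open>0 < d\<close> by (simp_all add: divide_less_eq)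
    show "finite P"
      unfolding P_def by (auto intro!: finite_PiE)
    show "P \<subseteq> \<Omega>"
    proof
      fix z assume "z \<in> P"
      then obtain s where s: "s \<in> PiE UNIV (\<lambda>_. {-1, 0, 1})" and z: "z = corner s"
        unfolding P_def by blast
      have "dist (z $ i) ((\<chi> i. complex_of_real (a i)) $ i) \<le> 2 * d" for i
        using PiE_mem[OF s, of i] \<open>0 < d\<close> by (auto simp: z corner_def dist_norm)
      then have "dist z (\<chi> i. complex_of_real (a i)) \<le> real CARD('n) * (2 * d)"
        by (rule dist_vec_le_card_mult)
      also have "\<dots> < \<delta>"
        using d_le(1) \<open>0 < \<delta>\<close> by (simp add: field_simps)
      finally show "z \<in> \<Omega>"
        using ball by (auto simp: dist_commute)
    qed
    fix \<alpha> :: "int ^ 'n" and b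
    assume "\<And>i. 0 \<le> b i" "\<And>i. \<bar>b i - a i\<bar> < d" "\<And>i. \<alpha> $ i < 0 \<Longrightarrow> 0 < a i"
    moreover have "corner (\<lambda>i. sgn (\<alpha> $ i)) \<in> P"
      unfolding P_def by (rule imageI) (auto simp: sgn_if split: if_splits)
    ultimately show "\<exists>p\<in>P. norm (monom \<alpha> (\<chi> i. complex_of_real (b i)))
        \<le> (\<Prod>i\<in>UNIV. ((R + d) / (R + 2 * d)) ^ nat \<bar>\<alpha> $ i\<bar>) * norm (monom \<alpha> p)"
      using norm_monom_le_geometric_shift[of a R b d \<alpha>] assms(3) aR d_le(2)
      unfolding corner_def by fastforce
  qed
qed

(* y = 0 is allowed: the quotient is then 0 by the convention x / 0 = 0. *)
lemma powr_divide_le_of_le_mult: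
  fixes x y c m :: real
  assumes "0 \<le> x" "x \<le> c * y" "0 \<le> y" "0 < m"
  shows "x powr m / y powr m \<le> c powr m"
proof (cases "y = 0")
  case False
  with assms have "0 < y" by simp
  have "x powr m \<le> (c * y) powr m"
    using assms by (intro powr_mono2) auto
  also have "\<dots> = c powr m * y powr m"
    by (rule powr_mult)
  finally show ?thesis
    using \<open>0 < y\<close> by (simp add: divide_le_eq)
qed simp

lemma norm_monom_divide_powr_le:
  fixes q C n m :: real
  assumes "0 < m" "0 < q" "0 \<le> n"
    and "norm (monom \<alpha> (\<chi> i. complex_of_real (norm (w $ i) powr (1 / m))))
      \<le> (\<Prod>i\<in>UNIV. q ^ nat \<bar>\<alpha> $ i\<bar>) * C * n"
  shows "norm (monom \<alpha> w / complex_of_real (n powr m)) \<le> C powr m * (\<Prod>i\<in>UNIV. (q powr m) ^ nat \<bar>\<alpha> $ i\<bar>)"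
proof -
  have "norm (monom \<alpha> w / complex_of_real (n powr m))
      = norm (monom \<alpha> (\<chi> i. complex_of_real (norm (w $ i) powr (1 / m)))) powr m / n powr m"
    unfolding norm_divide norm_monom_root[OF assms(1), of \<alpha> w, symmetric] by simp
  also have "\<dots> \<le> ((\<Prod>i\<in>UNIV. q ^ nat \<bar>\<alpha> $ i\<bar>) * C) powr m"
    using assms by (intro powr_divide_le_of_le_mult) auto
  also have "\<dots> = C powr m * (\<Prod>i\<in>UNIV. (q powr m) ^ nat \<bar>\<alpha> $ i\<bar>)"
    using \<open>0 < q\<close> power_int_powr_commute[of q "int _" m]
    by (simp add: powr_mult prod_powr_distrib mult.commute)
  finally show ?thesis .
qed

lemma reinhardt_power_local_majorant:
  fixes \<Omega> :: "(complex ^ 'n) set" and m :: real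
  assumes "open \<Omega>" "banach_holo_space \<Omega> A N" "0 < m" "w0 \<in> reinhardt_power \<Omega> m"
  obtains U M where "open U" "w0 \<in> U" "M summable_on {\<alpha>. restr \<Omega> (monom \<alpha>) \<in> A}"
    "\<And>\<alpha> w. restr \<Omega> (monom \<alpha>) \<in> A \<Longrightarrow> w \<in> U \<Longrightarrow>
       norm (monom \<alpha> w / complex_of_real (N (restr \<Omega> (monom \<alpha>)) powr m)) \<le> M \<alpha>"
proof -
  define root where "root w = (\<chi> i. complex_of_real (norm (w $ i) powr (1 / m)))" for w :: "complex ^ 'n"
  define a where "a i = norm (w0 $ i) powr (1 / m)" for i
  have root_w0: "(\<chi> i. complex_of_real (a i)) \<in> \<Omega>"
    using assms(4) by (simp add: reinhardt_power_def a_def)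
  have a_nonneg: "\<And>i. 0 \<le> a i"
    by (simp add: a_def)
  obtain d q P where "0 < d" "0 < q" "q < 1" "finite P" "P \<subseteq> \<Omega>" and corner:
    "\<And>\<alpha> b. (\<And>i. 0 \<le> b i) \<Longrightarrow> (\<And>i. \<bar>b i - a i\<bar> < d) \<Longrightarrow> (\<And>i. \<alpha> $ i < 0 \<Longrightarrow> 0 < a i) \<Longrightarrow>
       \<exists>p\<in>P. norm (monom \<alpha> (\<chi> i. complex_of_real (b i))) \<le> (\<Prod>i\<in>UNIV. q ^ nat \<bar>\<alpha> $ i\<bar>) * norm (monom \<alpha> p)"
    using monom_le_geometric_at_corners[OF assms(1) root_w0 a_nonneg] by metis
  obtain C where C: "\<And>p f. p \<in> P \<Longrightarrow> f \<in> A \<Longrightarrow> norm (f p) \<le> C * N f"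
    using banach_holo_space_uniform_eval_bound[OF assms(2) \<open>finite P\<close> \<open>P \<subseteq> \<Omega>\<close>] by blast
  have "0 \<le> q powr m" "q powr m < 1"
    using powr_less_mono2[of m q 1] \<open>0 < q\<close> \<open>q < 1\<close> assms(3) by auto
  show ?thesis
  proof
    have "continuous_on UNIV root"
      unfolding root_def using assms(3)
      by (intro continuous_on_vec_lambda continuous_on_of_real continuous_on_powr' continuous_intros) auto
    then show "open (root -` ball (root w0) d)"
      by (simp add: open_vimage)
    show "w0 \<in> root -` ball (root w0) d"
      using \<open>0 < d\<close> by simp
    show "(\<lambda>\<alpha>. C powr m * (\<Prod>i\<in>UNIV. (q powr m) ^ nat \<bar>\<alpha> $ i\<bar>)) summable_on {\<alpha>. restr \<Omega> (monom \<alpha>) \<in> A}"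
      using summable_on_subset[OF summable_on_prod_power_abs[OF \<open>0 \<le> q powr m\<close> \<open>q powr m < 1\<close>] subset_UNIV]
      by (rule summable_on_cmult_right)
    fix \<alpha> w
    assume \<alpha>: "restr \<Omega> (monom \<alpha>) \<in> A" and "w \<in> root -` ball (root w0) d"
    define b where "b i = norm (w $ i) powr (1 / m)" for i
    have "\<bar>b i - a i\<bar> < d" for i
    proof -
      have "dist (root w $ i) (root w0 $ i) < d"
        using dist_vec_nth_le[of "root w" i "root w0"] \<open>w \<in> root -` ball (root w0) d\<close>
        by (simp add: dist_commute)
      then show ?thesis
        by (simp add: root_def a_def b_def dist_norm flip: of_real_diff)
    qed
    moreover have "0 < a i" if "\<alpha> $ i < 0" for i
      using banach_holo_space_monom_nonzero_coord[OF assms(2,1) \<alpha> root_w0 that]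
      by (simp add: a_def)
    ultimately obtain p where "p \<in> P"
      and p: "norm (monom \<alpha> (root w)) \<le> (\<Prod>i\<in>UNIV. q ^ nat \<bar>\<alpha> $ i\<bar>) * norm (monom \<alpha> p)"
      using corner[of b \<alpha>] unfolding root_def b_def by auto
    have "norm (monom \<alpha> p) \<le> C * N (restr \<Omega> (monom \<alpha>))"
      using C[OF \<open>p \<in> P\<close> \<alpha>] \<open>p \<in> P\<close> \<open>P \<subseteq> \<Omega>\<close> by (auto simp: restr_def)
    with p \<open>0 < q\<close> have "norm (monom \<alpha> (root w)) \<le> (\<Prod>i\<in>UNIV. q ^ nat \<bar>\<alpha> $ i\<bar>) * (C * N (restr \<Omega> (monom \<alpha>)))"
      by (meson mult_left_mono order_trans prod_nonneg zero_le_power less_imp_le)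
    then have "norm (monom \<alpha> (root w)) \<le> (\<Prod>i\<in>UNIV. q ^ nat \<bar>\<alpha> $ i\<bar>) * C * N (restr \<Omega> (monom \<alpha>))"
      by (simp add: mult.assoc)
    then show "norm (monom \<alpha> w / complex_of_real (N (restr \<Omega> (monom \<alpha>)) powr m))
        \<le> C powr m * (\<Prod>i\<in>UNIV. (q powr m) ^ nat \<bar>\<alpha> $ i\<bar>)"
      using assms(2) \<alpha> unfolding root_def
      by (intro norm_monom_divide_powr_le[OF assms(3) \<open>0 < q\<close>]) (auto simp: banach_holo_space_def)
  qed
qed

theorem lemma3p3:
  fixes \<Omega> :: "(complex ^ 'n) set"
    and A :: "(complex ^ 'n \<Rightarrow> complex) set"
    and N :: "(complex ^ 'n \<Rightarrow> complex) \<Rightarrow> real"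
    and m :: real
  assumes "domain \<Omega>" and "reinhardt \<Omega>"
    and "banach_holo_space \<Omega> A N"
    and "m > 0"
  shows "locally_normally_convergent
           (\<lambda>\<alpha> z. monom \<alpha> z / complex_of_real (N (restr \<Omega> (monom \<alpha>)) powr m))
           {\<alpha>. restr \<Omega> (monom \<alpha>) \<in> A}
           (reinhardt_power \<Omega> m)"
proof (rule locally_normally_convergentI)
  fix w0 assume "w0 \<in> reinhardt_power \<Omega> m"
  moreover have "open \<Omega>"
    using assms(1) by (simp add: domain_def)
  ultimately obtain U M where "open U" "w0 \<in> U" "M summable_on {\<alpha>. restr \<Omega> (monom \<alpha>) \<in> A}"
    "\<And>\<alpha> w. restr \<Omega> (monom \<alpha>) \<in> A \<Longrightarrow> w \<in> U \<Longrightarrow>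
       norm (monom \<alpha> w / complex_of_real (N (restr \<Omega> (monom \<alpha>)) powr m)) \<le> M \<alpha>"
    using reinhardt_power_local_majorant[OF _ assms(3,4)] by blast
  then show "\<exists>U M. open U \<and> w0 \<in> U \<and> M summable_on {\<alpha>. restr \<Omega> (monom \<alpha>) \<in> A} \<and>
      (\<forall>\<alpha>\<in>{\<alpha>. restr \<Omega> (monom \<alpha>) \<in> A}. \<forall>w\<in>U.
         norm (monom \<alpha> w / complex_of_real (N (restr \<Omega> (monom \<alpha>)) powr m)) \<le> M \<alpha>)"
    by blast
qed

end
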